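(* Let $\Phi=(G,\varphi)$ be a complex unit gain graph with a pendant vertex $u$ whose unique neighbour is $v$, and let $F^{\varphi}=\Phi-u-v$ with underlying graph $F=G-u-v$. If $r(\Phi)=r(G)+2\theta(G)$ (respectively $r(\Phi)=r(G)-2\theta(G)$), then $v$ does not lie on any cycle of $G$, and $r(F^{\varphi})=r(F)+2\theta(F)$ (respectively $r(F^{\varphi})=r(F)-2\theta(F)$).
   Context: A complex unit gain graph $\Phi=(G,\varphi)$ consists of a finite simple graph $G$ with vertex set $\{v_1,\dots,v_n\}$ and a gain function $\varphi$ assigning to each oriented edge $e_{ij}$ ($v_iv_j\in E(G)$) a complex number of modulus $1$ with $\varphi(e_{ji})=\overline{\varphi(e_{ij})}$. $A(\Phi)$ is the Hermitian matrix with $(i,j)$ entry $\varphi(e_{ij})$ if $v_iv_j\in E(G)$ and $0$ otherwise; $r(\Phi)$ is its rank; $r(\cdot)$ of a simple graph is the rank of its $0$-$1$ adjacency matrix. Induced subgraphs of $\Phi$ (such as $\Phi-u-v$, obtained by deleting $u,v$ and incident edges) carry the gains of $\Phi$. $\theta(G)=|E(G)|-|V(G)|+\omega(G)$, $\omega(G)$ the number of components. A pendant vertex is a vertex of degree $1$. *)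

theory Defs
  imports Complex_Main
begin

definition simple_graph :: "'a set \<Rightarrow> ('a \<Rightarrow> 'a \<Rightarrow> bool) \<Rightarrow> bool" where
  "simple_graph V E \<longleftrightarrow> finite V \<and> (\<forall>x y. E x y \<longrightarrow> x \<in> V \<and> y \<in> V)
     \<and> (\<forall>x y. E x y \<longrightarrow> E y x) \<and> (\<forall>x. \<not> E x x)"

definition unit_gain :: "('a \<Rightarrow> 'a \<Rightarrow> bool) \<Rightarrow> ('a \<Rightarrow> 'a \<Rightarrow> complex) \<Rightarrow> bool" where
  "unit_gain E phi \<longleftrightarrow> (\<forall>x y. E x y \<longrightarrow> cmod (phi x y) = 1 \<and> phi y x = cnj (phi x y))"

definition gain_adj :: "('a \<Rightarrow> 'a \<Rightarrow> bool) \<Rightarrow> ('a \<Rightarrow> 'a \<Rightarrow> complex) \<Rightarrow> 'a \<Rightarrow> 'a \<Rightarrow> complex" where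
  "gain_adj E phi i j = (if E i j then phi i j else 0)"

definition adj01 :: "('a \<Rightarrow> 'a \<Rightarrow> bool) \<Rightarrow> 'a \<Rightarrow> 'a \<Rightarrow> complex" where
  "adj01 E i j = (if E i j then 1 else 0)"

definition indep_cols :: "'a set \<Rightarrow> ('a \<Rightarrow> 'a \<Rightarrow> complex) \<Rightarrow> 'a set \<Rightarrow> bool" where
  "indep_cols V M S \<longleftrightarrow> S \<subseteq> V \<and>
     (\<forall>c. (\<forall>i\<in>V. (\<Sum>j\<in>S. c j * M i j) = 0) \<longrightarrow> (\<forall>j\<in>S. c j = 0))"

definition mrank :: "'a set \<Rightarrow> ('a \<Rightarrow> 'a \<Rightarrow> complex) \<Rightarrow> nat" where
  "mrank V M = Max (card ` {S. indep_cols V M S})"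

definition reach :: "'a set \<Rightarrow> ('a \<Rightarrow> 'a \<Rightarrow> bool) \<Rightarrow> 'a \<Rightarrow> 'a \<Rightarrow> bool" where
  "reach V E = (\<lambda>x y. x \<in> V \<and> y \<in> V \<and> E x y)\<^sup>*\<^sup>*"

definition num_components :: "'a set \<Rightarrow> ('a \<Rightarrow> 'a \<Rightarrow> bool) \<Rightarrow> nat" where
  "num_components V E = card ((\<lambda>x. {y \<in> V. reach V E x y}) ` V)"

definition edge_set :: "'a set \<Rightarrow> ('a \<Rightarrow> 'a \<Rightarrow> bool) \<Rightarrow> 'a set set" where
  "edge_set V E = {{x, y} | x y. x \<in> V \<and> y \<in> V \<and> E x y}"

definition theta :: "'a set \<Rightarrow> ('a \<Rightarrow> 'a \<Rightarrow> bool) \<Rightarrow> int" where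
  "theta V E = int (card (edge_set V E)) - int (card V) + int (num_components V E)"

definition on_cycle :: "'a set \<Rightarrow> ('a \<Rightarrow> 'a \<Rightarrow> bool) \<Rightarrow> 'a \<Rightarrow> bool" where
  "on_cycle V E v \<longleftrightarrow> (\<exists>xs. length xs \<ge> 3 \<and> distinct xs \<and> set xs \<subseteq> V \<and> hd xs = v
     \<and> (\<forall>i. Suc i < length xs \<longrightarrow> E (xs ! i) (xs ! Suc i)) \<and> E (last xs) (hd xs))"

end

theory Submission
  imports Defs
begin

text \<open>Both A(Phi) and A(G) have the zero pattern of G, and for any two such matrices
  the ranks differ by at most 2 theta, by induction over a vertex that is isolated, pendant,
  or has two neighbours that remain connected without it (such a vertex is the end of a
  longest path). Deleting the pendant pair u, v lowers both ranks by exactly 2, while theta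
  does not increase, and strictly decreases if v lies on a cycle, since then two neighbours
  of v stay connected in F. So if Phi attains one of the extreme values, the bound for F
  forces theta(F) = theta(G): v is on no cycle and F attains the same extreme value.\<close>

section \<open>Rank of matrices indexed by finite sets\<close>

lemma indep_colsD:
  "indep_cols W M S \<Longrightarrow> \<forall>i\<in>W. (\<Sum>j\<in>S. c j * M i j) = 0 \<Longrightarrow> j \<in> S \<Longrightarrow> c j = 0"
  unfolding indep_cols_def by blast

lemma finite_indep_cols: "finite W \<Longrightarrow> finite {S. indep_cols W M S}"
  by (rule finite_subset[of _ "Pow W"]) (auto simp: indep_cols_def)

lemma indep_cols_finite: "finite W \<Longrightarrow> indep_cols W M S \<Longrightarrow> finite S"
  by (auto simp: indep_cols_def intro: finite_subset)

lemma card_le_mrank: "finite W \<Longrightarrow> indep_cols W M S \<Longrightarrow> card S \<le> mrank W M"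
  unfolding mrank_def by (rule Max_ge) (auto intro: finite_indep_cols)

lemma mrank_attained:
  assumes "finite W"
  obtains S where "indep_cols W M S" "card S = mrank W M"
proof -
  have "indep_cols W M {}"
    by (simp add: indep_cols_def)
  then have "mrank W M \<in> card ` {S. indep_cols W M S}"
    unfolding mrank_def using finite_indep_cols[OF assms] by (intro Max_in) auto
  then show ?thesis
    using that by auto
qed

lemma mrank_empty: "mrank {} M = 0"
proof -
  obtain S where "indep_cols {} M S" "card S = mrank {} M"
    using mrank_attained by blast
  then show ?thesis
    by (auto simp: indep_cols_def)
qed

lemma indep_cols_mono_rows: "indep_cols W' M S \<Longrightarrow> W' \<subseteq> W \<Longrightarrow> indep_cols W M S"
  unfolding indep_cols_def by blast

lemma mrank_mono: "finite W \<Longrightarrow> W' \<subseteq> W \<Longrightarrow> mrank W' M \<le> mrank W M"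
  by (metis finite_subset indep_cols_mono_rows card_le_mrank mrank_attained)

lemma indep_cols_Diff:
  assumes f: "finite W" and S: "indep_cols W M S"
  shows "indep_cols W M (S - {x})"
  unfolding indep_cols_def
proof (intro conjI allI impI ballI)
  show "S - {x} \<subseteq> W"
    using S by (auto simp: indep_cols_def)
next
  fix c j
  assume h: "\<forall>i\<in>W. (\<Sum>j\<in>S - {x}. c j * M i j) = 0" and j: "j \<in> S - {x}"
  have "(\<Sum>j\<in>S. (c(x := 0)) j * M i j) = (\<Sum>j\<in>S - {x}. c j * M i j)" for i
    using indep_cols_finite[OF f S] by (intro sum.mono_neutral_cong_right) auto
  then have "\<forall>i\<in>W. (\<Sum>j\<in>S. (c(x := 0)) j * M i j) = 0"
    using h by simp
  then have "\<forall>j\<in>S. (c(x := 0)) j = 0"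
    using S unfolding indep_cols_def by blast
  then show "c j = 0"
    using j by auto
qed

lemma indep_cols_delete_zero_row:
  assumes S: "indep_cols W M S" and zero: "\<forall>j\<in>S. M x j = 0" and x: "x \<notin> S"
  shows "indep_cols (W - {x}) M S"
  unfolding indep_cols_def
proof (intro conjI allI impI)
  show "S \<subseteq> W - {x}"
    using S x by (auto simp: indep_cols_def)
next
  fix c
  assume h: "\<forall>i\<in>W - {x}. (\<Sum>j\<in>S. c j * M i j) = 0"
  have "(\<Sum>j\<in>S. c j * M x j) = 0"
    using zero by simp
  then have "\<forall>i\<in>W. (\<Sum>j\<in>S. c j * M i j) = 0"
    using h by blast
  then show "\<forall>j\<in>S. c j = 0"
    using S by (auto simp: indep_cols_def)
qed

text \<open>If c0 is a dependency of the columns S that appears only after deleting row x, its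
  value alpha in row x is nonzero; subtracting multiples of c0 eliminates row x from any
  dependency of the remaining columns.\<close>

lemma indep_cols_delete_row_exchange:
  assumes f: "finite W" and S: "indep_cols W M S" and x: "x \<notin> S"
    and c0: "\<forall>i\<in>W - {x}. (\<Sum>j\<in>S. c0 j * M i j) = 0" and j0: "j0 \<in> S" "c0 j0 \<noteq> 0"
  shows "indep_cols (W - {x}) M (S - {j0})"
  unfolding indep_cols_def
proof (intro conjI allI impI ballI)
  show "S - {j0} \<subseteq> W - {x}"
    using S x by (auto simp: indep_cols_def)
  define \<alpha> where "\<alpha> = (\<Sum>j\<in>S. c0 j * M x j)"
  have "\<alpha> \<noteq> 0"
  proof
    assume "\<alpha> = 0"
    then have "\<forall>i\<in>W. (\<Sum>j\<in>S. c0 j * M i j) = 0"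
      using c0 \<alpha>_def by (metis DiffI empty_iff insert_iff)
    then show False
      using indep_colsD[OF S] j0 by blast
  qed
  fix d j
  assume hd: "\<forall>i\<in>W - {x}. (\<Sum>j\<in>S - {j0}. d j * M i j) = 0" and j: "j \<in> S - {j0}"
  let ?d = "d(j0 := 0)"
  have sd: "(\<Sum>j\<in>S. ?d j * M i j) = (\<Sum>j\<in>S - {j0}. d j * M i j)" for i
    using indep_cols_finite[OF f S] by (intro sum.mono_neutral_cong_right) auto
  define \<beta> where "\<beta> = (\<Sum>j\<in>S. ?d j * M x j)"
  define e where "e = (\<lambda>j. \<alpha> * ?d j - \<beta> * c0 j)"
  have se: "(\<Sum>j\<in>S. e j * M i j)
      = \<alpha> * (\<Sum>j\<in>S. ?d j * M i j) - \<beta> * (\<Sum>j\<in>S. c0 j * M i j)" for i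
    unfolding e_def by (simp add: sum_subtractf sum_distrib_left algebra_simps)
  have "(\<Sum>j\<in>S. e j * M i j) = 0" if i: "i \<in> W" for i
  proof (cases "i = x")
    case True
    then show ?thesis
      using se[of x] by (simp add: \<alpha>_def \<beta>_def)
  next
    case False
    then show ?thesis
      using se[of i] sd[of i] hd c0 i by simp
  qed
  then have e0: "e k = 0" if "k \<in> S" for k
    using indep_colsD[OF S] that by blast
  have "\<beta> = 0"
    using e0[OF j0(1)] j0(2) by (simp add: e_def)
  then have "\<alpha> * ?d j = 0"
    using e0[of j] j by (simp add: e_def)
  then show "d j = 0"
    using \<open>\<alpha> \<noteq> 0\<close> j by auto
qed

lemma indep_cols_delete_row:
  assumes f: "finite W" and S: "indep_cols W M S" and x: "x \<notin> S"
  obtains S' where "S' \<subseteq> S" "card S \<le> card S' + 1" "indep_cols (W - {x}) M S'"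
proof (cases "\<forall>c. (\<forall>i\<in>W - {x}. (\<Sum>j\<in>S. c j * M i j) = 0) \<longrightarrow> (\<forall>j\<in>S. c j = 0)")
  case True
  then have "indep_cols (W - {x}) M S"
    using S x by (auto simp: indep_cols_def)
  then show ?thesis
    by (intro that[of S]) auto
next
  case False
  then obtain c0 j0 where "\<forall>i\<in>W - {x}. (\<Sum>j\<in>S. c0 j * M i j) = 0" "j0 \<in> S" "c0 j0 \<noteq> 0"
    by auto
  moreover from this(2) have "card S \<le> card (S - {j0}) + 1"
    using indep_cols_finite[OF f S] by (simp add: card_Diff_singleton)
  ultimately show ?thesis
    using indep_cols_delete_row_exchange[OF f S x] by (intro that[of "S - {j0}"]) auto
qed

lemma card_le_card_Diff_singleton: "finite S \<Longrightarrow> card S \<le> card (S - {x}) + 1"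
  by (cases "x \<in> S") (auto simp: card_Diff_singleton)

lemma mrank_le_mrank_delete:
  assumes f: "finite W"
  shows "mrank W M \<le> mrank (W - {x}) M + 2"
proof -
  obtain S where S: "indep_cols W M S" "card S = mrank W M"
    using mrank_attained[OF f] by blast
  obtain S' where S': "card (S - {x}) \<le> card S' + 1" "indep_cols (W - {x}) M S'"
    using indep_cols_delete_row[OF f indep_cols_Diff[OF f S(1)], of x] by blast
  have "card S \<le> card (S - {x}) + 1"
    using card_le_card_Diff_singleton[OF indep_cols_finite[OF f S(1)]] .
  moreover have "card S' \<le> mrank (W - {x}) M"
    using card_le_mrank[OF _ S'(2)] f by simp
  ultimately show ?thesis
    using S'(1) S(2) by linarith
qed

lemma mrank_delete_zero_line:
  assumes f: "finite W" and row: "\<forall>j\<in>W. M x j = 0" and col: "\<forall>i\<in>W. M i x = 0"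
  shows "mrank W M = mrank (W - {x}) M"
proof (rule antisym)
  obtain S where S: "indep_cols W M S" "card S = mrank W M"
    using mrank_attained[OF f] by blast
  have SW: "S \<subseteq> W" using S by (auto simp: indep_cols_def)
  have "x \<notin> S"
  proof
    assume xS: "x \<in> S"
    let ?c = "\<lambda>j. if j = x then (1::complex) else 0"
    have "(\<Sum>j\<in>S. ?c j * M i j) = M i x" for i
      using xS indep_cols_finite[OF f S(1)] by (simp add: sum.remove)
    then have "\<forall>i\<in>W. (\<Sum>j\<in>S. ?c j * M i j) = 0"
      using col by simp
    then have "?c x = 0"
      by (rule indep_colsD[OF S(1) _ xS])
    then show False
      by simp
  qed
  then have "indep_cols (W - {x}) M S"
    using indep_cols_delete_zero_row[OF S(1)] row SW by blast
  then show "mrank W M \<le> mrank (W - {x}) M"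
    using card_le_mrank f S(2) by (metis finite_Diff)
qed (use mrank_mono[OF f] in blast)

lemma indep_cols_insert_pendant:
  assumes f: "finite W" and S: "indep_cols (W - {x, y}) M S"
    and x: "x \<in> W" and y: "y \<in> W" and xy: "x \<noteq> y"
    and mxy: "M x y \<noteq> 0" and myx: "M y x \<noteq> 0"
    and row: "\<forall>j\<in>W. j \<noteq> y \<longrightarrow> M x j = 0" and col: "\<forall>i\<in>W. i \<noteq> y \<longrightarrow> M i x = 0"
  shows "indep_cols W M (insert x (insert y S))"
  unfolding indep_cols_def
proof (intro conjI allI impI)
  have SW: "S \<subseteq> W - {x, y}"
    using S by (auto simp: indep_cols_def)
  then show "insert x (insert y S) \<subseteq> W"
    using x y by auto
  fix c
  assume h: "\<forall>i\<in>W. (\<Sum>j\<in>insert x (insert y S). c j * M i j) = 0"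
  have "x \<notin> S" "y \<notin> S" "finite S"
    using SW finite_subset[OF SW] f by auto
  then have sum_split: "(\<Sum>j\<in>insert x (insert y S). c j * M i j)
      = c x * M i x + c y * M i y + (\<Sum>j\<in>S. c j * M i j)" for i
    using xy by (simp add: add.assoc)
  have "(\<Sum>j\<in>S. c j * M x j) = 0"
    using row SW by (intro sum.neutral) auto
  then have "c y * M x y = 0"
    using h x sum_split[of x] row xy by simp
  then have cy: "c y = 0"
    using mxy by simp
  have "(\<Sum>j\<in>S. c j * M i j) = 0" if i: "i \<in> W - {x, y}" for i
    using h sum_split[of i] col cy i by auto
  then have cS: "\<forall>j\<in>S. c j = 0"
    using indep_colsD[OF S] by blast
  then have "c x * M y x = 0"
    using h y sum_split[of y] cy by simp
  then show "\<forall>j\<in>insert x (insert y S). c j = 0"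
    using myx cS cy by auto
qed

text \<open>A column that is a nonzero multiple of the unit vector at row y can absorb any
  dependency that appears when row y is deleted.\<close>

lemma indep_cols_delete_unit_column:
  assumes f: "finite W" and S: "indep_cols W M S" and x: "x \<in> S"
    and myx: "M y x \<noteq> 0" and col: "\<forall>i\<in>W. i \<noteq> y \<longrightarrow> M i x = 0"
  shows "indep_cols (W - {y}) M (S - {x, y})"
  unfolding indep_cols_def
proof (intro conjI allI impI)
  show "S - {x, y} \<subseteq> W - {y}"
    using S by (auto simp: indep_cols_def)
  fix d
  assume h: "\<forall>i\<in>W - {y}. (\<Sum>j\<in>S - {x, y}. d j * M i j) = 0"
  define \<beta> where "\<beta> = (\<Sum>j\<in>S - {x, y}. d j * M y j)"
  define c where "c = (\<lambda>j. if j = x then - \<beta> / M y x else if j = y then 0 else d j)"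
  have sum_split: "(\<Sum>j\<in>S. c j * M i j) = c x * M i x + (\<Sum>j\<in>S - {x, y}. d j * M i j)" for i
  proof -
    have fS: "finite S"
      using indep_cols_finite[OF f S] .
    have "(\<Sum>j\<in>S. c j * M i j) = (\<Sum>j\<in>insert x (S - {x, y}). c j * M i j)"
      using fS x by (intro sum.mono_neutral_cong_right) (auto simp: c_def)
    also have "\<dots> = c x * M i x + (\<Sum>j\<in>S - {x, y}. c j * M i j)"
      using fS by simp
    also have "(\<Sum>j\<in>S - {x, y}. c j * M i j) = (\<Sum>j\<in>S - {x, y}. d j * M i j)"
      by (rule sum.cong) (auto simp: c_def)
    finally show ?thesis .
  qed
  have "(\<Sum>j\<in>S. c j * M i j) = 0" if i: "i \<in> W" for i
  proof (cases "i = y")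
    case True
    then show ?thesis
      using sum_split[of y] myx by (simp add: c_def \<beta>_def)
  next
    case False
    then show ?thesis
      using sum_split[of i] h col i by simp
  qed
  then have "c j = 0" if "j \<in> S" for j
    using indep_colsD[OF S] that by blast
  then show "\<forall>j\<in>S - {x, y}. d j = 0"
    unfolding c_def by (metis DiffE insertCI)
qed

lemma indep_cols_delete_pendant:
  assumes f: "finite W" and S: "indep_cols W M S" and myx: "M y x \<noteq> 0"
    and row: "\<forall>j\<in>W. j \<noteq> y \<longrightarrow> M x j = 0" and col: "\<forall>i\<in>W. i \<noteq> y \<longrightarrow> M i x = 0"
  obtains T where "card S \<le> card T + 2" "indep_cols (W - {x, y}) M T"
proof -
  have fS: "finite S"
    using indep_cols_finite[OF f S] .
  obtain T where T: "T \<subseteq> S - {x, y}" "card S \<le> card T + 2" "indep_cols (W - {y}) M T"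
  proof (cases "x \<in> S")
    case True
    have "S - {x, y} = S - {x} - {y}"
      by blast
    then have "card S \<le> card (S - {x, y}) + 2"
      using card_le_card_Diff_singleton[of S x] card_le_card_Diff_singleton[of "S - {x}" y] fS
      by simp
    with indep_cols_delete_unit_column[OF f S True myx col] show ?thesis
      by (intro that[of "S - {x, y}"]) auto
  next
    case False
    obtain T where "T \<subseteq> S - {y}" "card (S - {y}) \<le> card T + 1" "indep_cols (W - {y}) M T"
      using indep_cols_delete_row[OF f indep_cols_Diff[OF f S], of y] by blast
    moreover have "card S \<le> card (S - {y}) + 1"
      using card_le_card_Diff_singleton[OF fS] .
    ultimately show ?thesis
      using False by (intro that[of T]) auto
  qed
  have "x \<notin> T" "\<forall>j\<in>T. M x j = 0"
    using T(1,3) row by (auto simp: indep_cols_def)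
  then have "indep_cols (W - {y} - {x}) M T"
    using indep_cols_delete_zero_row[OF T(3)] by blast
  moreover have "W - {y} - {x} = W - {x, y}"
    by blast
  ultimately show ?thesis
    using that T(2) by simp
qed

lemma mrank_delete_pendant:
  assumes f: "finite W" and x: "x \<in> W" and y: "y \<in> W" and xy: "x \<noteq> y"
    and mxy: "M x y \<noteq> 0" and myx: "M y x \<noteq> 0"
    and row: "\<forall>j\<in>W. j \<noteq> y \<longrightarrow> M x j = 0" and col: "\<forall>i\<in>W. i \<noteq> y \<longrightarrow> M i x = 0"
  shows "mrank W M = mrank (W - {x, y}) M + 2"
proof (rule antisym)
  obtain S where S: "indep_cols (W - {x, y}) M S" "card S = mrank (W - {x, y}) M"
    using mrank_attained[of "W - {x, y}"] f by blast
  have "x \<notin> S" "y \<notin> S"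
    using S(1) by (auto simp: indep_cols_def)
  moreover have "finite S"
    using indep_cols_finite[OF _ S(1)] f by blast
  ultimately have "card (insert x (insert y S)) = card S + 2"
    using xy by simp
  moreover have "card (insert x (insert y S)) \<le> mrank W M"
    using card_le_mrank[OF f indep_cols_insert_pendant[OF f S(1) assms(2-)]] .
  ultimately show "mrank (W - {x, y}) M + 2 \<le> mrank W M"
    using S(2) by simp
next
  obtain S where S: "indep_cols W M S" "card S = mrank W M"
    using mrank_attained[OF f] by blast
  obtain T where T: "card S \<le> card T + 2" "indep_cols (W - {x, y}) M T"
    using indep_cols_delete_pendant[OF f S(1) myx row col] .
  have "card T \<le> mrank (W - {x, y}) M"
    using card_le_mrank[OF _ T(2)] f by simp
  then show "mrank W M \<le> mrank (W - {x, y}) M + 2"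
    using S(2) T(1) by simp
qed

section \<open>Connectivity and the cyclomatic number\<close>

definition sym_loopless :: "('a \<Rightarrow> 'a \<Rightarrow> bool) \<Rightarrow> bool" where
  "sym_loopless E \<longleftrightarrow> (\<forall>x y. E x y \<longrightarrow> E y x) \<and> (\<forall>x. \<not> E x x)"

definition nbrs :: "'a set \<Rightarrow> ('a \<Rightarrow> 'a \<Rightarrow> bool) \<Rightarrow> 'a \<Rightarrow> 'a set" where
  "nbrs W E x = {y \<in> W. E x y}"

definition component :: "'a set \<Rightarrow> ('a \<Rightarrow> 'a \<Rightarrow> bool) \<Rightarrow> 'a \<Rightarrow> 'a set" where
  "component W E a = {b \<in> W. reach W E a b}"

lemma num_components_eq_card_component: "num_components W E = card (component W E ` W)"
  by (simp add: num_components_def component_def)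

lemma reach_refl: "reach W E a a"
  unfolding reach_def by simp

lemma reach_step: "a \<in> W \<Longrightarrow> b \<in> W \<Longrightarrow> E a b \<Longrightarrow> reach W E a b"
  unfolding reach_def by auto

lemma reach_trans: "reach W E a b \<Longrightarrow> reach W E b c \<Longrightarrow> reach W E a c"
  unfolding reach_def by (rule rtranclp_trans)

lemma reach_mono: "W' \<subseteq> W \<Longrightarrow> reach W' E a b \<Longrightarrow> reach W E a b"
  unfolding reach_def by (erule rtranclp_mono[THEN predicate2D, rotated]) auto

lemma reach_sym:
  assumes E: "sym_loopless E" and r: "reach W E a b"
  shows "reach W E b a"
  using r unfolding reach_def
proof (induction rule: rtranclp_induct)
  case (step y z)
  then have "(\<lambda>x y. x \<in> W \<and> y \<in> W \<and> E x y) z y"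
    using E by (auto simp: sym_loopless_def)
  then show ?case
    using step.IH by (rule converse_rtranclp_into_rtranclp)
qed simp

lemma component_eq_if_reach:
  assumes E: "sym_loopless E" and r: "reach W E a b"
  shows "component W E a = component W E b"
  unfolding component_def using reach_trans[OF r] reach_trans[OF reach_sym[OF E r]] by auto

lemma component_refl: "a \<in> W \<Longrightarrow> a \<in> component W E a"
  using reach_refl by (simp add: component_def)

lemma reach_if_component_eq:
  assumes "b \<in> W" and "component W E a = component W E b"
  shows "reach W E a b"
proof -
  have "b \<in> component W E a"
    using component_refl[OF assms(1)] assms(2) by simp
  then show ?thesis
    by (simp add: component_def)
qed

lemma reach_Diff_if_not_reach:
  assumes E: "sym_loopless E" and r: "reach W E a b" and nr: "\<not> reach W E x a"
  shows "reach (W - {x}) E a b"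
  using r unfolding reach_def
proof (induction rule: rtranclp_induct)
  case (step y z)
  have ry: "reach W E a y"
    using step.hyps(1) unfolding reach_def .
  have "y \<noteq> x"
    using reach_sym[OF E ry] nr by blast
  moreover have "z \<noteq> x"
  proof
    assume "z = x"
    then have "reach W E a x"
      using reach_trans[OF ry] reach_step[of y W z E] step.hyps(2) by simp
    then show False
      using reach_sym[OF E] nr by blast
  qed
  ultimately have "(\<lambda>x' y'. x' \<in> W - {x} \<and> y' \<in> W - {x} \<and> E x' y') y z"
    using step.hyps(2) by auto
  with step.IH show ?case
    by (rule rtranclp.rtrancl_into_rtrancl)
qed simp

lemma reach_from_deleted:
  assumes "reach W E x a"
  shows "a = x \<or> (\<exists>n\<in>nbrs W E x. reach (W - {x}) E n a)"
  using assms unfolding reach_def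
proof (induction rule: rtranclp_induct)
  case (step y z)
  have IH: "y = x \<or> (\<exists>n\<in>nbrs W E x. reach (W - {x}) E n y)"
    using step.IH unfolding reach_def .
  have "\<exists>n\<in>nbrs W E x. reach (W - {x}) E n z" if zx: "z \<noteq> x"
  proof (cases "y = x")
    case True
    then have "z \<in> nbrs W E x"
      using step.hyps(2) by (simp add: nbrs_def)
    then show ?thesis
      using reach_refl[of "W - {x}" E z] by blast
  next
    case False
    then obtain n where n: "n \<in> nbrs W E x" "reach (W - {x}) E n y"
      using IH by blast
    have "reach (W - {x}) E y z"
      using step.hyps(2) False zx by (intro reach_step) auto
    then show ?thesis
      using n reach_trans[OF n(2)] by blast
  qed
  then have "z = x \<or> (\<exists>n\<in>nbrs W E x. reach (W - {x}) E n z)"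
    by blast
  then show ?case
    unfolding reach_def .
qed simp

lemma component_delete_image_nbrs:
  assumes E: "sym_loopless E" and x: "x \<in> W"
  shows "component (W - {x}) E ` (component W E x - {x}) = component (W - {x}) E ` nbrs W E x"
proof
  show "component (W - {x}) E ` nbrs W E x \<subseteq> component (W - {x}) E ` (component W E x - {x})"
    using E x by (auto simp: nbrs_def component_def sym_loopless_def intro: reach_step)
  show "component (W - {x}) E ` (component W E x - {x}) \<subseteq> component (W - {x}) E ` nbrs W E x"
  proof
    fix C
    assume "C \<in> component (W - {x}) E ` (component W E x - {x})"
    then obtain a where a: "a \<in> component W E x - {x}" "C = component (W - {x}) E a"
      by auto
    then obtain n where n: "n \<in> nbrs W E x" "reach (W - {x}) E n a"
      using reach_from_deleted[of W E x a] by (auto simp: component_def)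
    then show "C \<in> component (W - {x}) E ` nbrs W E x"
      using a component_eq_if_reach[OF E n(2)] by auto
  qed
qed

lemma component_delete_eq_if_not_reach:
  assumes E: "sym_loopless E" and nr: "\<not> reach W E x b"
  shows "component (W - {x}) E b = component W E b"
proof
  show "component W E b \<subseteq> component (W - {x}) E b"
    using reach_Diff_if_not_reach[OF E _ nr] reach_sym[OF E] nr
    unfolding component_def by blast
qed (use reach_mono[of "W - {x}" W E b] in \<open>auto simp: component_def\<close>)

text \<open>Deleting x splits its component into the components of its neighbours and leaves
  all other components intact.\<close>

lemma num_components_delete:
  assumes f: "finite W" and x: "x \<in> W" and E: "sym_loopless E"
  shows "num_components W E + card (component (W - {x}) E ` nbrs W E x)
    = num_components (W - {x}) E + 1"
proof -
  let ?W' = "W - {x}"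
  define A where "A = component W E x - {x}"
  define B where "B = W - component W E x"
  have x_comp: "x \<in> component W E x"
    using component_refl[OF x] .
  have W': "?W' = A \<union> B" and finAB: "finite A" "finite B"
    using f x_comp by (auto simp: A_def B_def component_def)
  have disj: "component ?W' E ` A \<inter> component ?W' E ` B = {}"
  proof (rule ccontr)
    assume "component ?W' E ` A \<inter> component ?W' E ` B \<noteq> {}"
    then obtain a b where ab: "a \<in> A" "b \<in> B" "component ?W' E a = component ?W' E b"
      by auto
    moreover have "b \<in> ?W'"
      using ab(2) x_comp by (auto simp: B_def)
    ultimately have "reach W E a b"
      using reach_if_component_eq[of b ?W'] reach_mono[of ?W' W] by blast
    then show False
      using ab reach_trans[of W E x a b] by (auto simp: A_def B_def component_def)
  qed
  have "component ?W' E ` A \<union> component ?W' E ` B = component ?W' E ` (A \<union> B)"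
    by (rule image_Un[symmetric])
  also have "\<dots> = component ?W' E ` ?W'"
    by (simp only: W'[symmetric])
  finally have c1: "num_components ?W' E
      = card (component ?W' E ` nbrs W E x) + card (component ?W' E ` B)"
    unfolding num_components_eq_card_component
    using card_Un_disjoint[OF finite_imageI finite_imageI disj] finAB
      component_delete_image_nbrs[OF E x] by (simp add: A_def)
  have cB: "component W E b = component ?W' E b" if "b \<in> B" for b
    using component_delete_eq_if_not_reach[OF E] that by (simp add: B_def component_def)
  have cW: "component W E ` W = insert (component W E x) (component W E ` B)"
  proof -
    have "W = insert x (A \<union> B)"
      using W' x by auto
    moreover have "component W E ` A \<subseteq> {component W E x}"
      using component_eq_if_reach[OF E] by (auto simp: A_def component_def)
    ultimately show ?thesis
      by auto
  qed
  have "component W E x \<noteq> component W E b" if "b \<in> B" for b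
    using that component_refl[of b W E] by (auto simp: B_def)
  then have "component W E x \<notin> component W E ` B"
    by blast
  then have c2: "num_components W E = card (component ?W' E ` B) + 1"
    unfolding num_components_eq_card_component cW using finAB cB by simp
  show ?thesis
    using c1 c2 by simp
qed

lemma edge_set_delete:
  assumes x: "x \<in> W" and E: "sym_loopless E"
  shows "edge_set W E = edge_set (W - {x}) E \<union> (\<lambda>b. {x, b}) ` nbrs W E x"
proof -
  have "e \<in> edge_set (W - {x}) E \<union> (\<lambda>b. {x, b}) ` nbrs W E x" if e: "e \<in> edge_set W E" for e
  proof -
    obtain a b where ab: "e = {a, b}" "a \<in> W" "b \<in> W" "E a b"
      using e by (auto simp: edge_set_def)
    consider "a = x" | "b = x" | "a \<noteq> x" "b \<noteq> x"
      by blast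
    then show ?thesis
    proof cases
      case 1
      then have "b \<in> nbrs W E x"
        using ab by (simp add: nbrs_def)
      then show ?thesis
        using ab 1 by blast
    next
      case 2
      then have "e = {x, a}" "a \<in> nbrs W E x"
        using ab E by (auto simp: nbrs_def sym_loopless_def)
      then show ?thesis
        by blast
    next
      case 3
      then have "e \<in> edge_set (W - {x}) E"
        using ab by (auto simp: edge_set_def)
      then show ?thesis
        by blast
    qed
  qed
  moreover have "edge_set (W - {x}) E \<subseteq> edge_set W E"
    by (auto simp: edge_set_def)
  moreover have "(\<lambda>b. {x, b}) ` nbrs W E x \<subseteq> edge_set W E"
    using x by (auto simp: edge_set_def nbrs_def)
  ultimately show ?thesis
    by blast
qed

lemma card_edge_set_delete:
  assumes f: "finite W" and x: "x \<in> W" and E: "sym_loopless E"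
  shows "card (edge_set W E) = card (edge_set (W - {x}) E) + card (nbrs W E x)"
proof -
  let ?N = "nbrs W E x"
  have "x \<notin> e" if "e \<in> edge_set (W - {x}) E" for e
    using that unfolding edge_set_def by blast
  then have disj: "edge_set (W - {x}) E \<inter> (\<lambda>b. {x, b}) ` ?N = {}"
    by blast
  have "x \<notin> ?N"
    using E by (auto simp: nbrs_def sym_loopless_def)
  then have inj: "inj_on (\<lambda>b. {x, b}) ?N"
    unfolding inj_on_def by (auto simp: doubleton_eq_iff)
  have "finite (edge_set (W - {x}) E)"
    by (rule finite_subset[of _ "Pow W"]) (auto simp: edge_set_def f)
  moreover have "finite ?N"
    using f by (simp add: nbrs_def)
  ultimately show ?thesis
    unfolding edge_set_delete[OF x E] using card_Un_disjoint[OF _ _ disj] card_image[OF inj] by simp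
qed

lemma theta_delete:
  assumes f: "finite W" and x: "x \<in> W" and E: "sym_loopless E"
  shows "theta (W - {x}) E
    = theta W E - int (card (nbrs W E x)) + int (card (component (W - {x}) E ` nbrs W E x))"
proof -
  have "card W = card (W - {x}) + 1"
    using card.remove[OF f x] by simp
  then show ?thesis
    using card_edge_set_delete[OF assms] num_components_delete[OF assms] unfolding theta_def by simp
qed

lemma theta_delete_le:
  assumes "finite W" and "sym_loopless E"
  shows "theta (W - {x}) E \<le> theta W E"
proof (cases "x \<in> W")
  case True
  have "card (component (W - {x}) E ` nbrs W E x) \<le> card (nbrs W E x)"
    using assms(1) by (intro card_image_le) (simp add: nbrs_def)
  then show ?thesis
    using theta_delete[OF assms(1) True assms(2)] by simp
qed simp

lemma theta_delete_less:
  assumes f: "finite W" and x: "x \<in> W" and E: "sym_loopless E"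
    and ab: "a \<in> nbrs W E x" "b \<in> nbrs W E x" "a \<noteq> b" "reach (W - {x}) E a b"
  shows "theta (W - {x}) E < theta W E"
proof -
  have fN: "finite (nbrs W E x)"
    using f by (simp add: nbrs_def)
  have "\<not> inj_on (component (W - {x}) E) (nbrs W E x)"
    using ab component_eq_if_reach[OF E ab(4)] by (auto simp: inj_on_def)
  then have "card (component (W - {x}) E ` nbrs W E x) \<noteq> card (nbrs W E x)"
    using inj_on_iff_eq_card[OF fN] by blast
  then have "card (component (W - {x}) E ` nbrs W E x) < card (nbrs W E x)"
    using card_image_le[OF fN, of "component (W - {x}) E"] by linarith
  then show ?thesis
    using theta_delete[OF f x E] by simp
qed

section \<open>Paths and cycles\<close>

definition is_path :: "'a set \<Rightarrow> ('a \<Rightarrow> 'a \<Rightarrow> bool) \<Rightarrow> 'a list \<Rightarrow> bool" where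
  "is_path W E xs \<longleftrightarrow> xs \<noteq> [] \<and> distinct xs \<and> set xs \<subseteq> W
     \<and> (\<forall>i. Suc i < length xs \<longrightarrow> E (xs ! i) (xs ! Suc i))"

lemma is_path_mono: "is_path W E xs \<Longrightarrow> set xs \<subseteq> W' \<Longrightarrow> is_path W' E xs"
  by (simp add: is_path_def)

lemma is_path_tl:
  assumes p: "is_path W E xs" and ne: "tl xs \<noteq> []"
  shows "is_path (W - {hd xs}) E (tl xs)"
proof -
  obtain x ys where xs: "xs = x # ys"
    using p by (cases xs) (auto simp: is_path_def)
  have "E (ys ! i) (ys ! Suc i)" if "Suc i < length ys" for i
    using p that xs unfolding is_path_def by (metis Suc_less_eq length_Cons nth_Cons_Suc)
  then show ?thesis
    using p ne xs by (auto simp: is_path_def)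
qed

lemma reach_along_path:
  assumes p: "is_path W E xs" and a: "a \<in> set xs"
  shows "reach W E (hd xs) a"
proof -
  have "reach W E (xs ! 0) (xs ! j)" if "j < length xs" for j
    using that
  proof (induction j)
    case (Suc j)
    have "reach W E (xs ! j) (xs ! Suc j)"
      using p Suc.prems by (intro reach_step) (auto simp: is_path_def)
    with Suc show ?case
      using reach_trans by simp
  qed (rule reach_refl)
  moreover obtain j where "j < length xs" "xs ! j = a"
    using a by (auto simp: in_set_conv_nth)
  ultimately show ?thesis
    using p by (auto simp: is_path_def hd_conv_nth)
qed

lemma longest_path_exists:
  assumes f: "finite W" and ne: "W \<noteq> {}"
  obtains xs where "is_path W E xs" "\<And>ys. is_path W E ys \<Longrightarrow> length ys \<le> length xs"
proof -
  let ?P = "{xs. is_path W E xs}"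
  have "?P \<subseteq> {xs. set xs \<subseteq> W \<and> length xs \<le> card W}"
    using f by (auto simp: is_path_def distinct_card[symmetric] intro: card_mono)
  then have fP: "finite ?P"
    using finite_lists_length_le[OF f] finite_subset by blast
  obtain w where "w \<in> W"
    using ne by auto
  then have "[w] \<in> ?P"
    by (simp add: is_path_def)
  then have "Max (length ` ?P) \<in> length ` ?P"
    using fP by (intro Max_in) auto
  then obtain xs where "is_path W E xs" "length xs = Max (length ` ?P)"
    by auto
  then show ?thesis
    using fP that by auto
qed

text \<open>A neighbour off the path would extend it.\<close>

lemma nbrs_hd_longest_path:
  assumes E: "sym_loopless E" and p: "is_path W E xs"
    and longest: "\<And>ys. is_path W E ys \<Longrightarrow> length ys \<le> length xs"
  shows "nbrs W E (hd xs) \<subseteq> set (tl xs)"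
proof
  fix y
  assume y: "y \<in> nbrs W E (hd xs)"
  obtain x ys where xs: "xs = x # ys"
    using p by (cases xs) (auto simp: is_path_def)
  have "y \<in> set xs"
  proof (rule ccontr)
    assume "y \<notin> set xs"
    moreover have "E y x"
      using y E xs by (auto simp: nbrs_def sym_loopless_def)
    ultimately have "is_path W E (y # xs)"
      using p y xs by (auto simp: is_path_def nbrs_def nth_Cons split: nat.split)
    then show False
      using longest by fastforce
  qed
  moreover have "y \<noteq> x"
    using y E xs by (auto simp: nbrs_def sym_loopless_def)
  ultimately show "y \<in> set (tl xs)"
    using xs by simp
qed

text \<open>Take the first vertex of a longest path: all its neighbours lie on the rest of the path.\<close>

lemma reducible_vertex_exists:
  assumes f: "finite W" and ne: "W \<noteq> {}" and E: "sym_loopless E"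
  obtains (isolated) x where "x \<in> W" "nbrs W E x = {}"
    | (pendant) x y where "x \<in> W" "nbrs W E x = {y}"
    | (merging) x a b where "x \<in> W" "a \<in> nbrs W E x" "b \<in> nbrs W E x" "a \<noteq> b"
        "reach (W - {x}) E a b"
proof -
  obtain xs where p: "is_path W E xs" and longest: "\<And>ys. is_path W E ys \<Longrightarrow> length ys \<le> length xs"
    using longest_path_exists[OF f ne] by blast
  define x where "x = hd xs"
  have x: "x \<in> W"
    using p by (auto simp: is_path_def x_def)
  show ?thesis
  proof (cases "\<exists>a b. a \<in> nbrs W E x \<and> b \<in> nbrs W E x \<and> a \<noteq> b")
    case True
    then obtain a b where ab: "a \<in> nbrs W E x" "b \<in> nbrs W E x" "a \<noteq> b"
      by blast
    have sub: "nbrs W E x \<subseteq> set (tl xs)"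
      using nbrs_hd_longest_path[OF E p longest] by (simp add: x_def)
    then have "tl xs \<noteq> []"
      using ab by auto
    then have pt: "is_path (W - {x}) E (tl xs)"
      using is_path_tl[OF p] by (simp add: x_def)
    have "reach (W - {x}) E (hd (tl xs)) c" if "c \<in> nbrs W E x" for c
      using reach_along_path[OF pt] sub that by blast
    then have "reach (W - {x}) E a b"
      using reach_trans[OF reach_sym[OF E]] ab by blast
    then show ?thesis
      using merging x ab by blast
  next
    case no_two: False
    show ?thesis
    proof (cases "nbrs W E x = {}")
      case True
      then show ?thesis
        using isolated x by blast
    next
      case False
      then obtain y where "y \<in> nbrs W E x"
        by blast
      then have "nbrs W E x = {y}"
        using no_two by blast
      then show ?thesis
        using pendant x by blast
    qed
  qed
qed

lemma on_cycle_path_between_nbrs: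
  assumes "on_cycle W E v"
  obtains ys where "is_path (W - {v}) E ys" "hd ys \<noteq> last ys" "E v (hd ys)" "E (last ys) v"
proof -
  obtain xs where xs: "length xs \<ge> 3" "distinct xs" "set xs \<subseteq> W" "hd xs = v"
    "\<forall>i. Suc i < length xs \<longrightarrow> E (xs ! i) (xs ! Suc i)" "E (last xs) (hd xs)"
    using assms unfolding on_cycle_def by blast
  have ne: "xs \<noteq> []" "tl xs \<noteq> []"
    using xs(1) by (cases xs; auto)+
  have "is_path W E xs"
    using xs(2,3,5) ne(1) by (simp add: is_path_def)
  then have "is_path (W - {v}) E (tl xs)"
    using is_path_tl[OF _ ne(2)] xs(4) by simp
  moreover have hd: "hd (tl xs) = xs ! 1"
    using ne by (cases xs) (auto simp: hd_conv_nth)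
  moreover have last: "last (tl xs) = xs ! (length xs - 1)"
    using last_tl[of xs] last_conv_nth[OF ne(1)] ne(2) by simp
  moreover have "xs ! 1 \<noteq> xs ! (length xs - 1)"
    using nth_eq_iff_index_eq[OF xs(2), of 1 "length xs - 1"] xs(1) by simp
  moreover have "E (xs ! 0) (xs ! Suc 0)"
    using xs(1,5) by simp
  moreover have "xs ! 0 = v"
    using xs(4) ne(1) by (simp add: hd_conv_nth)
  moreover have "E (last (tl xs)) v"
    using xs(4,6) ne by (simp add: last_tl)
  ultimately show ?thesis
    using that by simp
qed

lemma pendant_notin_path:
  assumes E: "sym_loopless E" and nu: "nbrs W E u = {v}"
    and p: "is_path (W - {v}) E ys" and hl: "hd ys \<noteq> last ys"
  shows "u \<notin> set ys"
proof
  assume "u \<in> set ys"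
  then obtain i where i: "i < length ys" "ys ! i = u"
    by (auto simp: in_set_conv_nth)
  have on_path: "ys ! k \<in> W - {v}" if "k < length ys" for k
    using p nth_mem[OF that] unfolding is_path_def by blast
  have not_nbr: "\<not> E u (ys ! k)" if "k < length ys" for k
    using on_path[OF that] nu by (auto simp: nbrs_def)
  show False
  proof (cases "Suc i < length ys")
    case True
    then show False
      using p i not_nbr[OF True] by (auto simp: is_path_def)
  next
    case False
    have "ys \<noteq> []"
      using p by (simp add: is_path_def)
    have "i \<noteq> 0"
    proof
      assume "i = 0"
      then have "length ys = 1"
        using False \<open>ys \<noteq> []\<close> by (cases ys) auto
      then show False
        using hl \<open>ys \<noteq> []\<close> by (simp add: hd_conv_nth last_conv_nth)
    qed
    then have "Suc (i - 1) = i"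
      by simp
    then have "E (ys ! (i - 1)) u"
      using p i unfolding is_path_def by (metis lessI)
    then have "E u (ys ! (i - 1))"
      using E by (simp add: sym_loopless_def)
    then show False
      using not_nbr[of "i - 1"] i(1) by linarith
  qed
qed

lemma on_cycle_nbr_of_pendant:
  assumes E: "sym_loopless E" and nu: "nbrs W E u = {v}" and cyc: "on_cycle W E v"
  obtains a b where "a \<in> nbrs (W - {u}) E v" "b \<in> nbrs (W - {u}) E v" "a \<noteq> b"
    "reach (W - {u} - {v}) E a b"
proof -
  let ?F = "W - {u} - {v}"
  obtain ys where ys: "is_path (W - {v}) E ys" "hd ys \<noteq> last ys" "E v (hd ys)" "E (last ys) v"
    using on_cycle_path_between_nbrs[OF cyc] by blast
  have "u \<notin> set ys"
    by (rule pendant_notin_path[OF E nu ys(1,2)])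
  moreover have "set ys \<subseteq> W - {v}" "ys \<noteq> []"
    using ys(1) by (simp_all add: is_path_def)
  ultimately have "set ys \<subseteq> ?F"
    by blast
  then have pF: "is_path ?F E ys"
    by (rule is_path_mono[OF ys(1)])
  have ends: "hd ys \<in> set ys" "last ys \<in> set ys"
    using \<open>ys \<noteq> []\<close> by simp_all
  then have "hd ys \<in> nbrs (W - {u}) E v" "last ys \<in> nbrs (W - {u}) E v"
    using \<open>set ys \<subseteq> ?F\<close> ys(3,4) E by (auto simp: nbrs_def sym_loopless_def)
  moreover have "reach ?F E (hd ys) (last ys)"
    using reach_along_path[OF pF ends(2)] .
  ultimately show ?thesis
    using that ys(2) by blast
qed

section \<open>Ranks of matrices with the zero pattern of a graph\<close>

definition supported_by :: "('a \<Rightarrow> 'a \<Rightarrow> bool) \<Rightarrow> ('a \<Rightarrow> 'a \<Rightarrow> complex) \<Rightarrow> bool" where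
  "supported_by E M \<longleftrightarrow> (\<forall>i j. M i j \<noteq> 0 \<longleftrightarrow> E i j)"

lemma supported_by_gain_adj:
  assumes "unit_gain E phi"
  shows "supported_by E (gain_adj E phi)"
proof -
  have "phi i j \<noteq> 0" if "E i j" for i j
    using assms that unfolding unit_gain_def by force
  then show ?thesis
    by (auto simp: supported_by_def gain_adj_def)
qed

lemma supported_by_adj01: "supported_by E (adj01 E)"
  by (simp add: supported_by_def adj01_def)

lemma mrank_delete_isolated:
  assumes f: "finite W" and E: "sym_loopless E" and M: "supported_by E M"
    and x: "nbrs W E x = {}"
  shows "mrank W M = mrank (W - {x}) M"
proof (rule mrank_delete_zero_line[OF f])
  show "\<forall>j\<in>W. M x j = 0" "\<forall>i\<in>W. M i x = 0"
    using x M E unfolding nbrs_def supported_by_def sym_loopless_def by blast+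
qed

lemma mrank_delete_pendant_vertex:
  assumes f: "finite W" and E: "sym_loopless E" and M: "supported_by E M"
    and x: "x \<in> W" and xy: "nbrs W E x = {y}"
  shows "mrank W M = mrank (W - {x, y}) M + 2"
proof (rule mrank_delete_pendant[OF f x])
  have y: "y \<in> W" "E x y"
    using xy unfolding nbrs_def by blast+
  then show "y \<in> W" "x \<noteq> y" "M x y \<noteq> 0" "M y x \<noteq> 0"
    using M E unfolding supported_by_def sym_loopless_def by blast+
  show "\<forall>j\<in>W. j \<noteq> y \<longrightarrow> M x j = 0" "\<forall>i\<in>W. i \<noteq> y \<longrightarrow> M i x = 0"
    using xy M E unfolding nbrs_def supported_by_def sym_loopless_def by blast+
qed

lemma theta_delete2_le:
  assumes "finite W" and "sym_loopless E"
  shows "theta (W - {x, y}) E \<le> theta W E"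
proof -
  have "theta (W - {x} - {y}) E \<le> theta (W - {x}) E"
    using assms by (intro theta_delete_le) simp_all
  moreover have "W - {x} - {y} = W - {x, y}"
    by blast
  ultimately show ?thesis
    using theta_delete_le[OF assms, of x] by simp
qed

lemma theta_delete_pendant_less:
  assumes f: "finite W" and E: "sym_loopless E" and uv: "nbrs W E u = {v}"
    and cyc: "on_cycle W E v"
  shows "theta (W - {u, v}) E < theta W E"
proof -
  obtain a b where "a \<in> nbrs (W - {u}) E v" "b \<in> nbrs (W - {u}) E v" "a \<noteq> b"
    "reach (W - {u} - {v}) E a b"
    using on_cycle_nbr_of_pendant[OF E uv cyc] by blast
  moreover have "v \<in> W - {u}"
    using uv E unfolding nbrs_def sym_loopless_def by blast
  ultimately have "theta (W - {u} - {v}) E < theta (W - {u}) E"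
    using f by (intro theta_delete_less[OF _ _ E]) simp_all
  moreover have "W - {u} - {v} = W - {u, v}"
    by blast
  ultimately show ?thesis
    using theta_delete_le[OF f E, of u] by simp
qed

text \<open>Deleting a vertex whose neighbours stay connected lowers theta by at least 1 and
  each rank by at most 2.\<close>

lemma mrank_le_mrank_add_theta:
  assumes "finite W" and "sym_loopless E" and "supported_by E P" and "supported_by E Q"
  shows "int (mrank W P) \<le> int (mrank W Q) + 2 * theta W E"
  using assms(1)
proof (induction "card W" arbitrary: W rule: less_induct)
  case less
  note f = less.prems and E = assms(2) and P = assms(3) and Q = assms(4)
  have IH: "int (mrank W' P) \<le> int (mrank W' Q) + 2 * theta W' E" if "W' \<subset> W" for W'
    using less.hyps[OF psubset_card_mono[OF f that]] finite_subset[OF psubset_imp_subset[OF that] f]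
    by blast
  show ?case
  proof (cases "W = {}")
    case True
    then show ?thesis
      by (simp add: mrank_empty theta_def edge_set_def num_components_def)
  next
    case False
    then show ?thesis
    proof (cases rule: reducible_vertex_exists[OF f False E, case_names isolated pendant merging])
      case (isolated x)
      then have "W - {x} \<subset> W"
        by blast
      moreover have "int (mrank W P) = int (mrank (W - {x}) P)"
        "int (mrank W Q) = int (mrank (W - {x}) Q)"
        using mrank_delete_isolated[OF f E _ isolated(2)] P Q by simp_all
      ultimately show ?thesis
        using IH[of "W - {x}"] theta_delete_le[OF f E, of x] by linarith
    next
      case (pendant x y)
      then have "W - {x, y} \<subset> W"
        by blast
      moreover have "int (mrank W P) = int (mrank (W - {x, y}) P) + 2"
        "int (mrank W Q) = int (mrank (W - {x, y}) Q) + 2"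
        using mrank_delete_pendant_vertex[OF f E _ pendant] P Q by simp_all
      ultimately show ?thesis
        using IH[of "W - {x, y}"] theta_delete2_le[OF f E, of x y] by linarith
    next
      case (merging x a b)
      then have "W - {x} \<subset> W"
        by blast
      moreover have "int (mrank W P) \<le> int (mrank (W - {x}) P) + 2"
        "int (mrank (W - {x}) Q) \<le> int (mrank W Q)"
        using mrank_le_mrank_delete[OF f, of P x] mrank_mono[OF f, of "W - {x}" Q] by auto
      moreover have "theta (W - {x}) E < theta W E"
        using theta_delete_less[OF f merging(1) E merging(2-)] .
      ultimately show ?thesis
        using IH[of "W - {x}"] by linarith
    qed
  qed
qed

theorem theorem4p2:
  fixes V :: "'a set" and E :: "'a \<Rightarrow> 'a \<Rightarrow> bool" and phi :: "'a \<Rightarrow> 'a \<Rightarrow> complex"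
    and u v :: 'a
  assumes "simple_graph V E" and "unit_gain E phi"
    and "u \<in> V" and "{w \<in> V. E u w} = {v}"
  shows "(int (mrank V (gain_adj E phi)) = int (mrank V (adj01 E)) + 2 * theta V E \<longrightarrow>
            \<not> on_cycle V E v \<and>
            int (mrank (V - {u, v}) (gain_adj E phi))
              = int (mrank (V - {u, v}) (adj01 E)) + 2 * theta (V - {u, v}) E)
       \<and> (int (mrank V (gain_adj E phi)) = int (mrank V (adj01 E)) - 2 * theta V E \<longrightarrow>
            \<not> on_cycle V E v \<and>
            int (mrank (V - {u, v}) (gain_adj E phi))
              = int (mrank (V - {u, v}) (adj01 E)) - 2 * theta (V - {u, v}) E)"
proof -
  have f: "finite V" and E: "sym_loopless E"
    using assms(1) by (auto simp: simple_graph_def sym_loopless_def)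
  have P: "supported_by E (gain_adj E phi)" and Q: "supported_by E (adj01 E)"
    using supported_by_gain_adj[OF assms(2)] supported_by_adj01 by blast+
  have uv: "nbrs V E u = {v}"
    using assms(4) by (simp add: nbrs_def)
  let ?F = "V - {u, v}"
  have rank_P: "mrank V (gain_adj E phi) = mrank ?F (gain_adj E phi) + 2"
    and rank_Q: "mrank V (adj01 E) = mrank ?F (adj01 E) + 2"
    using mrank_delete_pendant_vertex[OF f E _ assms(3) uv] P Q by blast+
  have bounds: "int (mrank ?F (gain_adj E phi)) \<le> int (mrank ?F (adj01 E)) + 2 * theta ?F E"
    "int (mrank ?F (adj01 E)) \<le> int (mrank ?F (gain_adj E phi)) + 2 * theta ?F E"
    using mrank_le_mrank_add_theta[of ?F E] f E P Q by simp_all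
  have theta_le: "theta ?F E \<le> theta V E"
    using theta_delete2_le[OF f E] .
  have theta_less: "theta ?F E < theta V E" if "on_cycle V E v"
    using theta_delete_pendant_less[OF f E uv that] .
  show ?thesis
  proof (intro conjI impI)
    assume h: "int (mrank V (gain_adj E phi)) = int (mrank V (adj01 E)) + 2 * theta V E"
    then have "theta ?F E = theta V E"
      using rank_P rank_Q bounds(1) theta_le by linarith
    then show "\<not> on_cycle V E v"
      using theta_less by auto
    show "int (mrank ?F (gain_adj E phi)) = int (mrank ?F (adj01 E)) + 2 * theta ?F E"
      using h rank_P rank_Q \<open>theta ?F E = theta V E\<close> by linarith
  next
    assume h: "int (mrank V (gain_adj E phi)) = int (mrank V (adj01 E)) - 2 * theta V E"
    then have "theta ?F E = theta V E"
      using rank_P rank_Q bounds(2) theta_le by linarith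
    then show "\<not> on_cycle V E v"
      using theta_less by auto
    show "int (mrank ?F (gain_adj E phi)) = int (mrank ?F (adj01 E)) - 2 * theta ?F E"
      using h rank_P rank_Q \<open>theta ?F E = theta V E\<close> by linarith
  qed
qed

end
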